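(* Let $n\ge1$ and let $\mathcal{T}_n$ be the set of complete monotone triangles with $n$ rows. For $A=(a_{i,j})\in\mathcal{T}_n$ define arrays $\mathrm{AD}(A)=(b_{i,j})$, $\mathrm{R}(A)=(c_{i,j})$ and $\mathrm{H}(A)=(d_{i,j})$, $1\le i\le j\le n$, by: $b_{i,j}$ = the number of entries $x$ of the $j$-th SE-diagonal of $A$ with $x\ge i$; $c_{i,j}$ = the number of entries $x$ of the $(n+1-j)$-th NE-diagonal of $A$ with $x\le n+1-i$; $\mathrm{H}(A)$ is the array determined by the condition that for every $i\in\{1,\ldots,n\}$, $\{a_{i,i},a_{i,i+1},\ldots,a_{i,n}\}\cup\{d_{n+2-i,n+2-i},d_{n+2-i,n+3-i},\ldots,d_{n+2-i,n}\}=\{1,2,\ldots,n\}$ (for $i=1$ the second set is empty). Then $\mathrm{AD}$, $\mathrm{R}$ and $\mathrm{H}$ are well-defined permutations of $\mathcal{T}_n$, and $\mathrm{AD}=\mathrm{H}\circ\mathrm{R}$.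
   Context: A monotone triangle with $n$ rows is an array of integers $(a_{i,j})_{1\le i\le j\le n}$ such that $a_{i,j}\le a_{i+1,j+1}$ for $1\le i\le j<n$, $a_{i,j}\le a_{i-1,j}$ for $1<i\le j\le n$, and $a_{i,j}<a_{i,j+1}$ for $1\le i\le j\le n-1$. Its $i$-th row (counted from the bottom) is $(a_{i,i},\ldots,a_{i,n})$. It is complete if its bottom row $(a_{1,1},\ldots,a_{1,n})$ equals $(1,2,\ldots,n)$. For $1\le l\le n$, the $l$-th SE-diagonal of $(a_{i,j})$ is the sequence $(a_{l,l},a_{l-1,l},\ldots,a_{1,l})$, and the $l$-th NE-diagonal is the sequence $(a_{1,l},a_{2,l+1},\ldots,a_{n-l+1,n})$. *)

theory Defs
  imports Main
begin

text \<open>Triangular arrays are functions nat => nat => int; only the entries at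
positions 1 <= i <= j <= n are meaningful, all other values are normalised to 0.\<close>

definition in_tri :: "nat \<Rightarrow> nat \<Rightarrow> nat \<Rightarrow> bool" where
  "in_tri n i j \<longleftrightarrow> 1 \<le> i \<and> i \<le> j \<and> j \<le> n"

definition monotone_triangle :: "nat \<Rightarrow> (nat \<Rightarrow> nat \<Rightarrow> int) \<Rightarrow> bool" where
  "monotone_triangle n a \<longleftrightarrow>
     (\<forall>i j. 1 \<le> i \<and> i \<le> j \<and> j < n \<longrightarrow> a i j \<le> a (i+1) (j+1)) \<and>
     (\<forall>i j. 1 < i \<and> i \<le> j \<and> j \<le> n \<longrightarrow> a i j \<le> a (i-1) j) \<and>
     (\<forall>i j. 1 \<le> i \<and> i \<le> j \<and> j \<le> n - 1 \<longrightarrow> a i j < a i (j+1))"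

definition complete_mt :: "nat \<Rightarrow> (nat \<Rightarrow> nat \<Rightarrow> int) \<Rightarrow> bool" where
  "complete_mt n a \<longleftrightarrow> (\<forall>j. 1 \<le> j \<and> j \<le> n \<longrightarrow> a 1 j = int j)"

definition CMT :: "nat \<Rightarrow> (nat \<Rightarrow> nat \<Rightarrow> int) set" where
  "CMT n = {a. monotone_triangle n a \<and> complete_mt n a \<and> (\<forall>i j. \<not> in_tri n i j \<longrightarrow> a i j = 0)}"

text \<open>b_{i,j} = #entries x of the j-th SE-diagonal (a_{j,j},...,a_{1,j}) with x >= i.\<close>
definition AD :: "nat \<Rightarrow> (nat \<Rightarrow> nat \<Rightarrow> int) \<Rightarrow> (nat \<Rightarrow> nat \<Rightarrow> int)" where
  "AD n a = (\<lambda>i j. if in_tri n i j then int (card {k \<in> {1..j}. a k j \<ge> int i}) else 0)"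

text \<open>c_{i,j} = #entries x of the (n+1-j)-th NE-diagonal
  (a_{1,l}, a_{2,l+1}, ..., a_{n-l+1,n}), l = n+1-j, with x <= n+1-i.
  Its k-th entry is a_{k, l+k-1} = a_{k, n-j+k}, k = 1..j.\<close>
definition R :: "nat \<Rightarrow> (nat \<Rightarrow> nat \<Rightarrow> int) \<Rightarrow> (nat \<Rightarrow> nat \<Rightarrow> int)" where
  "R n a = (\<lambda>i j. if in_tri n i j
      then int (card {k \<in> {1..j}. a k (n - j + k) \<le> int (n + 1 - i)}) else 0)"

definition H_cond :: "nat \<Rightarrow> (nat \<Rightarrow> nat \<Rightarrow> int) \<Rightarrow> (nat \<Rightarrow> nat \<Rightarrow> int) \<Rightarrow> bool" where
  "H_cond n a d \<longleftrightarrow> (\<forall>i \<in> {1..n}.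
      (\<lambda>k. a i k) ` {i..n} \<union> (\<lambda>k. d (n + 2 - i) k) ` {n + 2 - i..n} = int ` {1..n})"

definition H :: "nat \<Rightarrow> (nat \<Rightarrow> nat \<Rightarrow> int) \<Rightarrow> (nat \<Rightarrow> nat \<Rightarrow> int)" where
  "H n a = (THE d. d \<in> CMT n \<and> H_cond n a d)"

end

theory Submission imports Defs begin

(* A monotone triangle has weakly decreasing columns (read upwards), strictly
   increasing rows and weakly increasing NE-diagonals.  Hence on an SE-diagonal the entries
   x >= i form an initial segment, which gives the threshold duality
       t <= AD(a)_{i,j}  <->  i <= a_{t,j}          (a complete, 1 <= t <= j).
   From it AD maps complete triangles to complete triangles and is an involution.
   The NE-diagonal map R is reduced to AD through the reflection
       flip(a)_{k,j} = n + 1 - a_{k,n+k-j},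
   an involution of the complete triangles with R = AD o flip.
   The heart of the argument: row i of R(a) and row n+2-i of AD(a) partition {1..n}, because
   by threshold duality (for a and for flip(a)) a common value would force both
   a_{t,j} >= n+2-i and a_{t,j} <= n+1-i for a suitable t.  As rows are strictly increasing,
   a row is determined by its set of entries, so the defining condition of H has exactly one
   solution, namely H(a) = R(AD(a)); the remaining claims follow by composing involutions. *)

section \<open>Order structure of monotone triangles\<close>

lemma monotone_triangleD:
  assumes "monotone_triangle n a"
  shows mt_diag_step: "1 \<le> i \<Longrightarrow> i \<le> j \<Longrightarrow> j < n \<Longrightarrow> a i j \<le> a (i + 1) (j + 1)"
    and mt_col_step: "1 < i \<Longrightarrow> i \<le> j \<Longrightarrow> j \<le> n \<Longrightarrow> a i j \<le> a (i - 1) j"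
    and mt_row_step: "1 \<le> i \<Longrightarrow> i \<le> j \<Longrightarrow> j \<le> n - 1 \<Longrightarrow> a i j < a i (j + 1)"
  using assms by (simp_all add: monotone_triangle_def)

lemma mt_column_mono:
  assumes mt: "monotone_triangle n a" and "1 \<le> t" "t \<le> t'" "t' \<le> j" "j \<le> n"
  shows "a t' j \<le> a t j"
  using assms(3,4)
proof (induction t' rule: dec_induct)
  case base
  then show ?case by simp
next
  case (step m)
  have "a (Suc m) j \<le> a (Suc m - 1) j"
    using mt_col_step[OF mt, of "Suc m" j] step assms(2,5) by simp
  then show ?case using step by simp
qed

lemma mt_row_strict_mono:
  assumes mt: "monotone_triangle n a" and "1 \<le> t"
  shows "strict_mono_on {t..n} (\<lambda>k. a t k)"
proof (rule strict_mono_onI)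
  fix j j' assume j: "j \<in> {t..n}" "j' \<in> {t..n}" "j < j'"
  have "Suc j \<le> j'" using j by simp
  then show "a t j < a t j'"
  proof (induction j' rule: dec_induct)
    case base
    show ?case using mt_row_step[OF mt, of t j] j assms(2) by simp
  next
    case (step m)
    then have "a t m < a t (Suc m)"
      using mt_row_step[OF mt, of t m] j assms(2) by simp
    then show ?case using step by simp
  qed
qed

lemma CMT_bottom: "a \<in> CMT n \<Longrightarrow> 1 \<le> j \<Longrightarrow> j \<le> n \<Longrightarrow> a 1 j = int j"
  by (simp add: CMT_def complete_mt_def)

lemma CMT_outside: "a \<in> CMT n \<Longrightarrow> \<not> in_tri n i j \<Longrightarrow> a i j = 0"
  by (simp add: CMT_def)

text \<open>The lower bound of the entry a_{t,j} comes from the NE-diagonal through the bottom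
  entry a_{1,j+1-t} = j+1-t.\<close>
lemma CMT_lower_bound:
  assumes a: "a \<in> CMT n"
  shows "in_tri n t j \<Longrightarrow> int (j + 1 - t) \<le> a t j"
proof (induction t arbitrary: j)
  case 0
  then show ?case by (simp add: in_tri_def)
next
  case (Suc t)
  show ?case
  proof (cases "t = 0")
    case True
    then show ?thesis using CMT_bottom[OF a] Suc.prems by (simp add: in_tri_def)
  next
    case False
    then have tj: "1 \<le> t" "t \<le> j - 1" "j - 1 < n" "in_tri n t (j - 1)"
      using Suc.prems by (auto simp: in_tri_def)
    have "a t (j - 1) \<le> a (t + 1) (j - 1 + 1)"
      using mt_diag_step[of n a t "j - 1"] a tj by (simp add: CMT_def)
    then show ?thesis using Suc.IH[OF tj(4)] tj by simp
  qed
qed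

lemma CMT_entry_bounds:
  assumes a: "a \<in> CMT n" and tj: "in_tri n t j"
  shows "1 \<le> a t j" "a t j \<le> int j"
proof -
  show "1 \<le> a t j" using CMT_lower_bound[OF a tj] tj by (simp add: in_tri_def)
  have "a t j \<le> a 1 j"
    using mt_column_mono[of n a 1 t j] a tj by (simp add: CMT_def in_tri_def)
  then show "a t j \<le> int j" using CMT_bottom[OF a] tj by (simp add: in_tri_def)
qed

section \<open>Threshold duality and the involution AD\<close>

lemma initial_segment_card:
  assumes closed: "\<And>s s'. 1 \<le> s' \<Longrightarrow> s' \<le> s \<Longrightarrow> s \<le> m \<Longrightarrow> P s \<Longrightarrow> P s'"
    and t: "1 \<le> t" "t \<le> m"
  shows "P t \<longleftrightarrow> t \<le> card {s \<in> {1..m}. P s}"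
proof
  assume "P t"
  then have "{1..t} \<subseteq> {s \<in> {1..m}. P s}" using closed t by auto
  from card_mono[OF _ this] show "t \<le> card {s \<in> {1..m}. P s}" by simp
next
  assume le: "t \<le> card {s \<in> {1..m}. P s}"
  show "P t"
  proof (rule ccontr)
    assume "\<not> P t"
    then have "s < t" if "s \<in> {1..m}" "P s" for s
      using closed[of t s] that t by (meson atLeastAtMost_iff not_less)
    then have "{s \<in> {1..m}. P s} \<subseteq> {1..t - 1}" by fastforce
    from card_mono[OF _ this] have "card {s \<in> {1..m}. P s} \<le> t - 1" by simp
    then show False using le t by simp
  qed
qed

lemma AD_threshold:
  assumes mt: "monotone_triangle n a" and ij: "in_tri n i j" and t: "1 \<le> t" "t \<le> j"
  shows "int t \<le> AD n a i j \<longleftrightarrow> int i \<le> a t j"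
proof -
  have "int i \<le> a t j \<longleftrightarrow> t \<le> card {k \<in> {1..j}. int i \<le> a k j}"
  proof (rule initial_segment_card[OF _ t])
    fix s s' assume "1 \<le> s'" "s' \<le> s" "s \<le> j" "int i \<le> a s j"
    then show "int i \<le> a s' j"
      using mt_column_mono[OF mt, of s' s j] ij by (simp add: in_tri_def)
  qed
  then show ?thesis using ij by (simp add: AD_def)
qed

lemma AD_in_CMT:
  assumes a: "a \<in> CMT n"
  shows "AD n a \<in> CMT n"
proof -
  have mt: "monotone_triangle n a" using a by (simp add: CMT_def)
  define S where "S i j = {k \<in> {1..j}. int i \<le> a k j}" for i j
  have AD_S: "AD n a i j = int (card (S i j))" if "in_tri n i j" for i j
    using that by (simp add: AD_def S_def)
  have diag: "AD n a i j \<le> AD n a (i + 1) (j + 1)" if h: "1 \<le> i" "i \<le> j" "j < n" for i j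
  proof -
    have "a k j < a k (j + 1)" if "k \<in> {1..j}" for k
      using mt_row_step[OF mt, of k j] h that by simp
    then have "S i j \<subseteq> S (i + 1) (j + 1)" by (force simp: S_def)
    then show ?thesis using h by (simp add: AD_S in_tri_def card_mono S_def)
  qed
  have col: "AD n a i j \<le> AD n a (i - 1) j" if h: "1 < i" "i \<le> j" "j \<le> n" for i j
  proof -
    have "S i j \<subseteq> S (i - 1) j" by (auto simp: S_def)
    moreover have "in_tri n i j" "in_tri n (i - 1) j" using h by (auto simp: in_tri_def)
    ultimately show ?thesis by (simp add: AD_S card_mono S_def)
  qed
  have row: "AD n a i j < AD n a i (j + 1)" if h: "1 \<le> i" "i \<le> j" "j \<le> n - 1" for i j
  proof -
    have "a k j \<le> a (k + 1) (j + 1)" if "k \<in> {1..j}" for k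
      using mt_diag_step[OF mt, of k j] h that by simp
    then have "Suc ` S i j \<subseteq> S i (j + 1)" by (force simp: S_def)
    moreover have "1 \<in> S i (j + 1)" "1 \<notin> Suc ` S i j"
      using CMT_bottom[OF a, of "j + 1"] h by (auto simp: S_def)
    ultimately have "Suc ` S i j \<subset> S i (j + 1)" by blast
    then have "card (Suc ` S i j) < card (S i (j + 1))"
      by (rule psubset_card_mono[rotated]) (simp add: S_def)
    then show ?thesis using h by (simp add: AD_S in_tri_def card_image)
  qed
  have bottom: "AD n a 1 j = int j" if h: "1 \<le> j" "j \<le> n" for j
  proof -
    have "S 1 j = {1..j}" using CMT_entry_bounds(1)[OF a] h by (auto simp: S_def in_tri_def)
    then show ?thesis using h by (simp add: AD_S in_tri_def)
  qed
  show ?thesis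
    unfolding CMT_def monotone_triangle_def complete_mt_def
    using diag col row bottom by (simp add: AD_def)
qed

text \<open>AD is an involution: by threshold duality, AD(AD(a))_{t,j} counts the i <= j with
  i <= a_{t,j}.\<close>
lemma AD_involutive:
  assumes a: "a \<in> CMT n"
  shows "AD n (AD n a) = a"
proof (intro ext)
  fix t j
  show "AD n (AD n a) t j = a t j"
  proof (cases "in_tri n t j")
    case False
    then show ?thesis using CMT_outside[OF a] by (simp add: AD_def)
  next
    case True
    have mt: "monotone_triangle n a" using a by (simp add: CMT_def)
    have "{i \<in> {1..j}. int t \<le> AD n a i j} = {i \<in> {1..j}. int i \<le> a t j}"
      using AD_threshold[OF mt] True by (auto simp: in_tri_def)
    also have "\<dots> = {1..nat (a t j)}" using CMT_entry_bounds[OF a True] by auto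
    finally show ?thesis using True CMT_entry_bounds(1)[OF a True] by (simp add: AD_def)
  qed
qed

section \<open>The reflection flip and the map R\<close>

text \<open>Reflection of a triangle: rows are reversed and complemented in {1..n}, so that
  NE-diagonals become SE-diagonals.\<close>
definition flip :: "nat \<Rightarrow> (nat \<Rightarrow> nat \<Rightarrow> int) \<Rightarrow> nat \<Rightarrow> nat \<Rightarrow> int" where
  "flip n a = (\<lambda>k j. if in_tri n k j then int (n + 1) - a k (n + k - j) else 0)"

text \<open>flip preserves complete monotone triangles: it exchanges the column and NE-diagonal
  inequalities and reverses (hence, after complementing, keeps increasing) the rows.\<close>
lemma flip_in_CMT:
  assumes a: "a \<in> CMT n"
  shows "flip n a \<in> CMT n"
proof -
  have mt: "monotone_triangle n a" using a by (simp add: CMT_def)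
  have diag: "flip n a k j \<le> flip n a (k + 1) (j + 1)" if h: "1 \<le> k" "k \<le> j" "j < n" for k j
  proof -
    have "a (k + 1) (n + k - j) \<le> a (k + 1 - 1) (n + k - j)"
      using mt_col_step[OF mt, of "k + 1" "n + k - j"] h by simp
    then show ?thesis using h by (simp add: flip_def in_tri_def)
  qed
  have col: "flip n a k j \<le> flip n a (k - 1) j" if h: "1 < k" "k \<le> j" "j \<le> n" for k j
  proof -
    define c where "c = n + (k - 1) - j"
    have c: "1 \<le> k - 1" "k - 1 \<le> c" "c < n" "n + k - j = c + 1" using h by (auto simp: c_def)
    have "a (k - 1) c \<le> a k (n + k - j)"
      using mt_diag_step[OF mt c(1-3)] h by (simp add: c(4))
    moreover have "in_tri n k j" "in_tri n (k - 1) j" using h by (auto simp: in_tri_def)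
    ultimately show ?thesis by (simp add: flip_def c_def)
  qed
  have row: "flip n a k j < flip n a k (j + 1)" if h: "1 \<le> k" "k \<le> j" "j \<le> n - 1" for k j
  proof -
    have "a k (n + k - (j + 1)) < a k (n + k - (j + 1) + 1)"
      using mt_row_step[OF mt, of k "n + k - (j + 1)"] h by simp
    moreover have "n + k - (j + 1) + 1 = n + k - j" using h by simp
    moreover have "in_tri n k j" "in_tri n k (j + 1)" using h by (auto simp: in_tri_def)
    ultimately show ?thesis by (simp add: flip_def)
  qed
  have bottom: "flip n a 1 j = int j" if h: "1 \<le> j" "j \<le> n" for j
    using CMT_bottom[OF a, of "n + 1 - j"] h by (simp add: flip_def in_tri_def)
  show ?thesis
    unfolding CMT_def monotone_triangle_def complete_mt_def
    using diag col row bottom by (simp add: flip_def)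
qed

lemma flip_involutive:
  assumes a: "a \<in> CMT n"
  shows "flip n (flip n a) = a"
proof (intro ext)
  fix k j
  show "flip n (flip n a) k j = a k j"
    using CMT_outside[OF a, of k j] by (auto simp: flip_def in_tri_def)
qed

text \<open>The NE-diagonals of a are the SE-diagonals of flip(a), so R = AD o flip.\<close>
lemma R_eq_AD_flip: "R n a = AD n (flip n a)"
proof (intro ext)
  fix i j
  have "a k (n - j + k) \<le> int (n + 1 - i) \<longleftrightarrow> int i \<le> flip n a k j"
    if "in_tri n i j" "k \<in> {1..j}" for k
    using that by (auto simp: flip_def in_tri_def add.commute)
  then show "R n a i j = AD n (flip n a) i j"
    by (simp add: R_def AD_def cong: conj_cong)
qed

lemma R_in_CMT: "a \<in> CMT n \<Longrightarrow> R n a \<in> CMT n"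
  by (simp add: R_eq_AD_flip AD_in_CMT flip_in_CMT)

section \<open>Rows determine triangles satisfying the condition of H\<close>

lemma strict_mono_on_image_eq:
  fixes f g :: "nat \<Rightarrow> 'a::linorder"
  assumes "strict_mono_on {m..n} f" "strict_mono_on {m..n} g"
    and "f ` {m..n} = g ` {m..n}" and "k \<in> {m..n}"
  shows "f k = g k"
proof -
  have sorted: "sorted_wrt (<) (map h [m..<Suc n])"
    if "strict_mono_on {m..n} h" for h :: "nat \<Rightarrow> 'a"
    by (rule sorted_wrt_map_mono[OF sorted_wrt_upt]) (use that in \<open>auto simp: strict_mono_on_def\<close>)
  have "map f [m..<Suc n] = map g [m..<Suc n]"
    by (rule strict_sorted_equal[OF sorted[OF assms(2)] sorted[OF assms(1)]])
      (simp only: set_map set_upt atLeastLessThanSuc_atLeastAtMost assms(3))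
  then have "\<forall>x \<in> {m..n}. f x = g x"
    by (simp only: map_eq_conv set_upt atLeastLessThanSuc_atLeastAtMost)
  then show ?thesis using assms(4) by blast
qed

lemma CMT_row_card:
  assumes d: "d \<in> CMT n" and "1 \<le> t"
  shows "card ((\<lambda>k. d t k) ` {t..n}) = n + 1 - t"
  using card_image[OF strict_mono_on_imp_inj_on[OF mt_row_strict_mono]] d assms(2)
  by (simp add: CMT_def)

lemma CMT_row_subset:
  assumes d: "d \<in> CMT n" and "1 \<le> t"
  shows "(\<lambda>k. d t k) ` {t..n} \<subseteq> int ` {1..n}"
proof
  fix x assume "x \<in> (\<lambda>k. d t k) ` {t..n}"
  then obtain k where k: "k \<in> {t..n}" "x = d t k" by blast
  then have "1 \<le> x" "x \<le> int n"
    using CMT_entry_bounds[OF d, of t k] assms(2) by (auto simp: in_tri_def)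
  then show "x \<in> int ` {1..n}" by (intro image_eqI[where x = "nat x"]) auto
qed

lemma CMT_bottom_row: "d \<in> CMT n \<Longrightarrow> (\<lambda>k. d 1 k) ` {1..n} = int ` {1..n}"
  using CMT_bottom[of d n] by (intro image_cong) auto

text \<open>The condition of H is symmetric (the row pairing i <-> n+2-i is an involution).\<close>
lemma H_cond_sym:
  assumes d: "d \<in> CMT n" and hc: "H_cond n x d"
  shows "H_cond n d x"
  unfolding H_cond_def
proof
  fix m assume m: "m \<in> {1..n}"
  show "(\<lambda>k. d m k) ` {m..n} \<union> (\<lambda>k. x (n + 2 - m) k) ` {n + 2 - m..n} = int ` {1..n}"
  proof (cases "m = 1")
    case True
    then show ?thesis using CMT_bottom_row[OF d] by simp
  next
    case False
    then have "n + 2 - m \<in> {1..n}" "n + 2 - (n + 2 - m) = m" using m by auto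
    then show ?thesis using hc unfolding H_cond_def by (metis Un_commute)
  qed
qed

lemma H_cond_row:
  assumes d: "d \<in> CMT n" and hc: "H_cond n x d" and m: "2 \<le> m" "m \<le> n"
  shows "(\<lambda>k. d m k) ` {m..n} = int ` {1..n} - (\<lambda>k. x (n + 2 - m) k) ` {n + 2 - m..n}"
proof -
  define X where "X = (\<lambda>k. x (n + 2 - m) k) ` {n + 2 - m..n}"
  define D where "D = (\<lambda>k. d m k) ` {m..n}"
  have "n + 2 - m \<in> {1..n}" "n + 2 - (n + 2 - m) = m" using m by auto
  then have U: "X \<union> D = int ` {1..n}" using hc unfolding H_cond_def X_def D_def by metis
  have "card X \<le> m - 1" using card_image_le[of "{n + 2 - m..n}"] m by (simp add: X_def)
  moreover have "card (int ` {1..n} - X) = n - card X"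
    using card_Diff_subset[OF _ Un_upper1[of X D, unfolded U]] by (simp add: card_image X_def)
  ultimately have "card (int ` {1..n} - X) \<ge> n + 1 - m" using m by arith
  moreover have "card D = n + 1 - m" using CMT_row_card[OF d] m by (simp add: D_def)
  moreover have "int ` {1..n} - X \<subseteq> D" using U by blast
  ultimately have "int ` {1..n} - X = D" by (intro card_seteq) (auto simp: D_def)
  then show ?thesis by (simp add: D_def X_def)
qed

lemma H_cond_unique:
  assumes d1: "d1 \<in> CMT n" and d2: "d2 \<in> CMT n"
    and h1: "H_cond n x d1" and h2: "H_cond n x d2"
  shows "d1 = d2"
proof (intro ext)
  fix t k
  show "d1 t k = d2 t k"
  proof (cases "in_tri n t k \<and> t \<noteq> 1")
    case False
    then consider "\<not> in_tri n t k" | "t = 1" "1 \<le> k" "k \<le> n" by (auto simp: in_tri_def)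
    then show ?thesis
      by cases (use CMT_outside[OF d1] CMT_outside[OF d2] CMT_bottom[OF d1, of k]
          CMT_bottom[OF d2, of k] in auto)
  next
    case True
    then have t: "1 \<le> t" "2 \<le> t" "t \<le> n" "k \<in> {t..n}" by (auto simp: in_tri_def)
    have mt: "monotone_triangle n d1" "monotone_triangle n d2"
      using d1 d2 by (simp_all add: CMT_def)
    show ?thesis
      by (rule strict_mono_on_image_eq[OF mt_row_strict_mono[OF mt(1) t(1)]
            mt_row_strict_mono[OF mt(2) t(1)] _ t(4)])
        (simp add: H_cond_row[OF d1 h1 t(2,3)] H_cond_row[OF d2 h2 t(2,3)])
  qed
qed

lemma H_eqI:
  assumes "d \<in> CMT n" "H_cond n x d"
  shows "H n x = d"
  unfolding H_def by (rule the_equality) (use assms H_cond_unique in blast)+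

section \<open>Rows of R(a) and AD(a) are complementary\<close>

text \<open>Both values would count, via threshold duality, the same initial segment for the entry
  a_{t,j} with t = j+k-n, which is impossible as one count asks a_{t,j} <= n+1-i and the
  other a_{t,j} >= n+2-i.\<close>
lemma R_AD_rows_disjoint:
  assumes a: "a \<in> CMT n" and i: "2 \<le> i" "i \<le> n"
    and k: "k \<in> {i..n}" and j: "j \<in> {n + 2 - i..n}"
  shows "R n a i k \<noteq> AD n a (n + 2 - i) j"
proof
  assume eq: "R n a i k = AD n a (n + 2 - i) j"
  define t where "t = j + k - n"
  have t: "1 \<le> t" "t \<le> k" "t \<le> j" "n + t - k = j" using k j i by (auto simp: t_def)
  have mt: "monotone_triangle n a" "monotone_triangle n (flip n a)"
    using a flip_in_CMT[OF a] by (simp_all add: CMT_def)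
  have "int t \<le> R n a i k \<longleftrightarrow> int i \<le> flip n a t k"
    using AD_threshold[OF mt(2), of i k t] k i t by (simp add: R_eq_AD_flip in_tri_def)
  also have "\<dots> \<longleftrightarrow> \<not> int (n + 2 - i) \<le> a t j"
    using t k i by (auto simp: flip_def in_tri_def)
  also have "\<dots> \<longleftrightarrow> \<not> int t \<le> AD n a (n + 2 - i) j"
    using AD_threshold[OF mt(1), of "n + 2 - i" j t] j i t by (simp add: in_tri_def)
  finally show False using eq by simp
qed

text \<open>R(a) and AD(a) satisfy the defining condition of H: disjoint rows of sizes n+1-i and
  i-1 inside {1..n} must cover it.\<close>
lemma H_cond_R_AD:
  assumes a: "a \<in> CMT n"
  shows "H_cond n (R n a) (AD n a)"
  unfolding H_cond_def
proof
  fix i assume i: "i \<in> {1..n}"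
  have Ra: "R n a \<in> CMT n" using R_in_CMT[OF a] .
  have ADa: "AD n a \<in> CMT n" using AD_in_CMT[OF a] .
  define X where "X = (\<lambda>k. R n a i k) ` {i..n}"
  define Y where "Y = (\<lambda>k. AD n a (n + 2 - i) k) ` {n + 2 - i..n}"
  show "(\<lambda>k. R n a i k) ` {i..n} \<union> (\<lambda>k. AD n a (n + 2 - i) k) ` {n + 2 - i..n} = int ` {1..n}"
  proof (cases "i = 1")
    case True
    then show ?thesis using CMT_bottom_row[OF Ra] by simp
  next
    case False
    then have i2: "2 \<le> i" "i \<le> n" using i by auto
    have "X \<inter> Y = {}" using R_AD_rows_disjoint[OF a i2] by (auto simp: X_def Y_def)
    then have "card (X \<union> Y) = (n + 1 - i) + (n + 1 - (n + 2 - i))"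
      using CMT_row_card[OF Ra, of i] CMT_row_card[OF ADa, of "n + 2 - i"] i2
      by (simp add: card_Un_disjoint X_def Y_def)
    then have "card (X \<union> Y) = card (int ` {1..n})" using i2 by (simp add: card_image)
    moreover have "X \<union> Y \<subseteq> int ` {1..n}"
      using CMT_row_subset[OF Ra, of i] CMT_row_subset[OF ADa, of "n + 2 - i"] i2
      by (simp add: X_def Y_def)
    ultimately show ?thesis by (simp add: card_subset_eq X_def Y_def)
  qed
qed

text \<open>Existence: R(AD(a)) solves the condition of H for a, since AD is an involution.\<close>
lemma H_cond_solution:
  assumes a: "a \<in> CMT n"
  shows "R n (AD n a) \<in> CMT n" "H_cond n a (R n (AD n a))"
proof -
  show "R n (AD n a) \<in> CMT n" using R_in_CMT[OF AD_in_CMT[OF a]] .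
  have "H_cond n (R n (AD n a)) a"
    using H_cond_R_AD[OF AD_in_CMT[OF a]] AD_involutive[OF a] by simp
  then show "H_cond n a (R n (AD n a))" by (rule H_cond_sym[OF a])
qed

theorem mainTheorem2:
  fixes n :: nat
  assumes "n \<ge> 1"
  shows "(\<forall>a \<in> CMT n. \<exists>!d. d \<in> CMT n \<and> H_cond n a d)
       \<and> bij_betw (AD n) (CMT n) (CMT n)
       \<and> bij_betw (R n) (CMT n) (CMT n)
       \<and> bij_betw (H n) (CMT n) (CMT n)
       \<and> (\<forall>a \<in> CMT n. AD n a = H n (R n a))"
proof -
  have unique: "\<forall>a \<in> CMT n. \<exists>!d. d \<in> CMT n \<and> H_cond n a d"
    using H_cond_solution H_cond_unique by blast
  have H_RAD: "H n a = (R n \<circ> AD n) a" if "a \<in> CMT n" for a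
    using H_eqI H_cond_solution[OF that] by simp
  have AD_HR: "\<forall>a \<in> CMT n. AD n a = H n (R n a)"
    using H_eqI[OF AD_in_CMT H_cond_R_AD] by simp
  have bij_AD: "bij_betw (AD n) (CMT n) (CMT n)"
    by (rule bij_betw_byWitness[where f' = "AD n"]) (auto simp: AD_in_CMT AD_involutive)
  have bij_flip: "bij_betw (flip n) (CMT n) (CMT n)"
    by (rule bij_betw_byWitness[where f' = "flip n"]) (auto simp: flip_in_CMT flip_involutive)
  have "R n = AD n \<circ> flip n" by (simp add: fun_eq_iff R_eq_AD_flip)
  then have bij_R: "bij_betw (R n) (CMT n) (CMT n)"
    using bij_betw_trans[OF bij_flip bij_AD] by simp
  have bij_H: "bij_betw (H n) (CMT n) (CMT n)"
    using bij_betw_cong[of "CMT n" "H n" "R n \<circ> AD n", OF H_RAD] bij_betw_trans[OF bij_AD bij_R]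
    by simp
  show ?thesis using unique bij_AD bij_R bij_H AD_HR by blast
qed

end
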